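(* Let $p$ be a prime, $e\ge1$, $q=p^e$, $0\le\ell\le e-1$, and let $m\ge n$. Let $\varphi_1,\dots,\varphi_m\in\mathbb{F}_q^n$ span $\mathbb{F}_q^n$ (i.e. form a frame for $\mathbb{F}_q^n$), and let $\Phi$ be the $n\times m$ matrix whose $j$-th column is $\varphi_j$, viewed as a linear map $\mathbb{F}_q^m\to\mathbb{F}_q^n$. Let $\Phi^{\dagger_\ell}=\sigma_\ell(\Phi)^t$, the $m\times n$ matrix (map $\mathbb{F}_q^n\to\mathbb{F}_q^m$) obtained by raising every entry of $\Phi$ to the power $p^\ell$ and transposing. Then $\operatorname{Ker}(\Phi^{\dagger_\ell}\Phi)=\operatorname{Ker}\Phi$ and $\operatorname{Im}(\Phi^{\dagger_\ell}\Phi)=\operatorname{Im}\Phi^{\dagger_\ell}$.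
   Context: $\sigma_\ell(c)=c^{p^\ell}$ for $c\in\mathbb{F}_q$, applied entrywise to matrices. Equivalently, $\Phi^{\dagger_\ell}\mathbf{y}=\big((\varphi_i,\mathbf{y})_\ell\big)_{i=1}^m$ where $(\mathbf{x},\mathbf{y})_\ell=\sum_{i}x_i^{p^\ell}y_i$. *)

theory Defs
  imports "HOL-Analysis.Analysis"
begin

definition is_frame :: "('m::finite \<Rightarrow> 'a::field ^ 'n::finite) \<Rightarrow> bool" where
  "is_frame \<phi> \<longleftrightarrow> (\<forall>y. \<exists>c::'m \<Rightarrow> 'a. (\<Sum>j\<in>UNIV. c j *s \<phi> j) = y)"

definition synth_mat :: "('m::finite \<Rightarrow> 'a ^ 'n::finite) \<Rightarrow> 'a ^ 'm ^ 'n" where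
  "synth_mat \<phi> = (\<chi> i j. \<phi> j $ i)"

definition frob_adj :: "nat \<Rightarrow> nat \<Rightarrow> 'a::field ^ 'm::finite ^ 'n::finite \<Rightarrow> 'a ^ 'n ^ 'm" where
  "frob_adj p l A = (\<chi> j i. (A $ i $ j) ^ (p ^ l))"

definition mat_ker :: "'a::field ^ 'm::finite ^ 'n::finite \<Rightarrow> ('a ^ 'm) set" where
  "mat_ker A = {x. A *v x = 0}"

definition mat_im :: "'a::field ^ 'm::finite ^ 'n::finite \<Rightarrow> ('a ^ 'n) set" where
  "mat_im A = range (\<lambda>x. A *v x)"

end

theory Submission
  imports Defs "HOL-Number_Theory.Residues" "HOL-Computational_Algebra.Primes"
begin

text \<open>The frame condition makes \<open>\<Phi>\<close> surjective, so \<open>\<Phi>\<^sup>T\<close> is injective. Over a field of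
  characteristic \<open>p\<close> the map \<open>x \<mapsto> x ^ p ^ l\<close> is an additive, multiplicative bijection, and
  \<open>\<Phi>\<^sup>\<dagger>\<^sup>\<ell>\<close> applied to the entrywise \<open>p ^ l\<close>-th power of \<open>z\<close> is the entrywise
  \<open>p ^ l\<close>-th power of \<open>\<Phi>\<^sup>T z\<close>; hence \<open>\<Phi>\<^sup>\<dagger>\<^sup>\<ell>\<close> is injective as well. Composing an
  injective map on the left does not change the kernel, and composing a surjective map
  on the right does not change the image.\<close>

lemma CHAR_eq_if_card_eq_prime_power:
  assumes "prime p" and "CARD('a::{field,finite}) = p ^ e"
  shows "CHAR('a) = p"
proof -
  have prime_char: "prime CHAR('a)"
    by (simp add: finite_imp_CHAR_pos prime_CHAR_semidom)
  moreover have "CHAR('a) dvd p ^ e"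
    using CHAR_dvd_CARD[where 'a='a] assms(2) by simp
  ultimately have "CHAR('a) dvd p"
    using prime_dvd_power by blast
  with prime_char assms(1) show ?thesis
    by (simp add: primes_dvd_imp_eq)
qed

lemma surj_power_CHAR_power:
  assumes "prime CHAR('a::{field,finite})"
  shows "surj (\<lambda>x::'a. x ^ CHAR('a) ^ l)"
proof -
  have "inj (\<lambda>x::'a. x ^ CHAR('a) ^ l)"
  proof
    fix x y :: 'a
    assume "x ^ CHAR('a) ^ l = y ^ CHAR('a) ^ l"
    moreover have "x ^ CHAR('a) ^ l = (x - y) ^ CHAR('a) ^ l + y ^ CHAR('a) ^ l"
      using freshmans_dream'[OF assms refl, of "x - y" y] by simp
    ultimately show "x = y"
      by simp
  qed
  then show ?thesis
    by (simp add: finite_UNIV_inj_surj)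
qed

lemma inj_transpose_if_surj:
  fixes A :: "'a::field ^ 'm ^ 'n"
  assumes "surj ((*v) A)"
  shows "inj ((*v) (transpose A))"
proof -
  obtain C where "A ** C = mat 1"
    using assms matrix_right_invertible_surjective by blast
  then have "transpose C ** transpose A = mat 1"
    by (metis matrix_transpose_mul transpose_mat)
  then show ?thesis
    using matrix_left_invertible_injective by blast
qed

lemma frob_adj_mult_power_vec:
  fixes A :: "'a::field ^ 'm ^ 'n"
  assumes "prime CHAR('a)" and "CHAR('a) = p"
  shows "frob_adj p l A *v (\<chi> i. z $ i ^ p ^ l) = (\<chi> j. (transpose A *v z) $ j ^ p ^ l)"
proof -
  have power_sum: "(\<Sum>i\<in>UNIV. f i) ^ p ^ l = (\<Sum>i\<in>UNIV. f i ^ p ^ l)" for f :: "'n \<Rightarrow> 'a"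
    using freshmans_dream_sum'[OF assms(1) refl, where n = l] assms(2) by simp
  show ?thesis
    by (simp add: vec_eq_iff frob_adj_def transpose_def matrix_vector_mult_def power_sum
        power_mult_distrib)
qed

lemma inj_frob_adj_if_surj:
  fixes A :: "'a::{field,finite} ^ 'm ^ 'n"
  assumes "prime CHAR('a)" and "CHAR('a) = p" and "surj ((*v) A)"
  shows "inj ((*v) (frob_adj p l A))"
proof -
  have p_pos: "p > 0"
    using assms(1,2) prime_gt_0_nat by blast
  have trivial_kernel: "y = 0" if "frob_adj p l A *v y = 0" for y
  proof -
    have "\<forall>i. \<exists>r. y $ i = r ^ p ^ l"
      using surj_power_CHAR_power[OF assms(1), of l] assms(2) by (auto dest: surjD)
    then obtain root where root: "\<And>i. y $ i = root i ^ p ^ l"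
      by metis
    define z where "z = (\<chi> i. root i)"
    have y_eq: "y = (\<chi> i. z $ i ^ p ^ l)"
      by (simp add: z_def vec_eq_iff root)
    have "(\<chi> j. (transpose A *v z) $ j ^ p ^ l) = 0"
      using that frob_adj_mult_power_vec[OF assms(1,2), of l A z] y_eq by simp
    then have "transpose A *v z = 0"
      using p_pos by (simp add: vec_eq_iff)
    then have "z = 0"
      using inj_transpose_if_surj[OF assms(3)] by (metis injD matrix_vector_mult_0_right)
    then show ?thesis
      using p_pos by (simp add: y_eq vec_eq_iff)
  qed
  show ?thesis
  proof (rule injI)
    fix x y
    assume "frob_adj p l A *v x = frob_adj p l A *v y"
    then have "frob_adj p l A *v (x - y) = 0"
      by (simp add: matrix_vector_mult_diff_distrib)
    then show "x = y"
      using trivial_kernel by fastforce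
  qed
qed

lemma surj_synth_mat_if_is_frame:
  assumes "is_frame \<phi>"
  shows "surj ((*v) (synth_mat \<phi>))"
proof -
  have "synth_mat \<phi> *v (\<chi> j. c j) = (\<Sum>j\<in>UNIV. c j *s \<phi> j)" for c
    by (simp add: vec_eq_iff synth_mat_def matrix_vector_mult_def sum_component mult.commute)
  then show ?thesis
    using assms unfolding is_frame_def by (metis surj_def)
qed

lemma mat_ker_mult_if_inj:
  assumes "inj ((*v) B)"
  shows "mat_ker (B ** A) = mat_ker A"
  using assms unfolding mat_ker_def
  by (metis (mono_tags) injD matrix_vector_mul_assoc matrix_vector_mult_0_right)

lemma mat_im_mult_if_surj:
  assumes "surj ((*v) A)"
  shows "mat_im (B ** A) = mat_im B"
proof -
  have "range ((*v) (B ** A)) = (*v) B ` range ((*v) A)"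
    by (simp add: image_image matrix_vector_mul_assoc)
  then show ?thesis
    using assms unfolding mat_im_def by simp
qed

theorem mainTheorem2:
  fixes p e l :: nat and \<phi> :: "'m::finite \<Rightarrow> 'a::{field,finite} ^ 'n::finite"
  assumes "prime p" and "e \<ge> 1" and "CARD('a) = p ^ e" and "l \<le> e - 1"
    and "CARD('n) \<le> CARD('m)"
    and "is_frame \<phi>"
  shows "mat_ker (frob_adj p l (synth_mat \<phi>) ** synth_mat \<phi>) = mat_ker (synth_mat \<phi>)
     \<and> mat_im (frob_adj p l (synth_mat \<phi>) ** synth_mat \<phi>) = mat_im (frob_adj p l (synth_mat \<phi>))"
proof -
  have char: "CHAR('a) = p"
    using CHAR_eq_if_card_eq_prime_power assms(1,3) by blast
  with assms(1) have prime_char: "prime CHAR('a)"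
    by simp
  have surj: "surj ((*v) (synth_mat \<phi>))"
    using surj_synth_mat_if_is_frame[OF assms(6)] .
  have inj: "inj ((*v) (frob_adj p l (synth_mat \<phi>)))"
    using inj_frob_adj_if_surj[OF prime_char char surj] .
  show ?thesis
    using mat_ker_mult_if_inj[OF inj] mat_im_mult_if_surj[OF surj] by blast
qed

end
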